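(* The functors $\downarrow$ and $\uparrow$ restrict to mutually inverse isomorphisms of categories $$\mathcal S\!\uparrow\;\cong\;\mathcal S\!\downarrow,\qquad \mathcal S(n)\!\uparrow\;\cong\;\mathcal S(n)\!\downarrow,\qquad \mathcal S_\ell\!\uparrow\;\cong\;\mathcal S_{\ell+1}\!\downarrow,\qquad \mathcal S_\ell(n)\!\uparrow\;\cong\;\mathcal S_{\ell+1}(n)\!\downarrow$$ (with $\downarrow$ going from left to right and $\uparrow$ from right to left).
   Context: Let $R$ be a commutative principal ideal domain, $p$ a generator of a maximal ideal. A $p$-module is a finite-length $R$-module annihilated by some power of $p$. $\mathcal S$ is the category of embeddings $(A\subset B)$ of a submodule in a $p$-module, morphisms $(A\subset B)\to(A'\subset B')$ being $R$-maps $f:B\to B'$ with $f(A)\subseteq A'$. $\mathcal S_\ell$: full subcategory with $p^\ell A=0$; $\mathcal S(n)$: full subcategory with $p^nB=0$; $\mathcal S_\ell(n)=\mathcal S_\ell\cap\mathcal S(n)$. Lifting: $(A\subset B)\!\uparrow=(p^{-1}A\subset B)$ where $p^{-1}A=\{b\in B:pb\in A\}$; reducing: $(A\subset B)\!\downarrow=(pA\subset B)$; both are the identity on underlying maps. For $\mathcal U$ one of $\mathcal S,\mathcal S_\ell,\mathcal S(n),\mathcal S_\ell(n)$, $\mathcal U\!\uparrow$ (resp. $\mathcal U\!\downarrow$) is the full subcategory of $\mathcal S$ of all objects $X\!\uparrow$ (resp. $X\!\downarrow$) with $X\in\mathcal U$. *)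

theory Defs
  imports Main "HOL.Modules"
begin

definition is_ideal :: "'r::comm_ring_1 set \<Rightarrow> bool" where
  "is_ideal I \<longleftrightarrow> module.subspace ((*) :: 'r \<Rightarrow> 'r \<Rightarrow> 'r) I"

definition principal :: "'r::comm_ring_1 \<Rightarrow> 'r set" where
  "principal a = {r * a | r. True}"

definition all_ideals_principal :: "'r::comm_ring_1 itself \<Rightarrow> bool" where
  "all_ideals_principal _ \<longleftrightarrow> (\<forall>I::'r set. is_ideal I \<longrightarrow> (\<exists>a. I = principal a))"

definition maximal_ideal :: "'r::comm_ring_1 set \<Rightarrow> bool" where
  "maximal_ideal I \<longleftrightarrow> is_ideal I \<and> I \<noteq> UNIV \<and>
     (\<forall>J. is_ideal J \<and> I \<subseteq> J \<longrightarrow> J = I \<or> J = UNIV)"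

(* Modules are submodules B of an ambient module (type 'm with scalar multiplication s). *)
definition finite_length :: "('r::comm_ring_1 \<Rightarrow> 'm::ab_group_add \<Rightarrow> 'm) \<Rightarrow> 'm set \<Rightarrow> bool" where
  "finite_length s B \<longleftrightarrow> (\<exists>N::nat. \<forall>Ms. (\<forall>M\<in>set Ms. module.subspace s M \<and> M \<subseteq> B)
        \<and> sorted_wrt (\<subset>) Ms \<longrightarrow> length Ms \<le> N)"

definition p_module :: "('r::comm_ring_1 \<Rightarrow> 'm::ab_group_add \<Rightarrow> 'm) \<Rightarrow> 'r \<Rightarrow> 'm set \<Rightarrow> bool" where
  "p_module s p B \<longleftrightarrow> module.subspace s B \<and> finite_length s B \<and> (\<exists>k::nat. \<forall>b\<in>B. s (p ^ k) b = 0)"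

(* Objects (A \<subseteq> B) are encoded as pairs (A, B). *)
definition objS :: "('r::comm_ring_1 \<Rightarrow> 'm::ab_group_add \<Rightarrow> 'm) \<Rightarrow> 'r \<Rightarrow> 'm set \<times> 'm set \<Rightarrow> bool" where
  "objS s p X \<longleftrightarrow> p_module s p (snd X) \<and> module.subspace s (fst X) \<and> fst X \<subseteq> snd X"

definition objS_l :: "('r::comm_ring_1 \<Rightarrow> 'm::ab_group_add \<Rightarrow> 'm) \<Rightarrow> 'r \<Rightarrow> nat \<Rightarrow> 'm set \<times> 'm set \<Rightarrow> bool" where
  "objS_l s p l X \<longleftrightarrow> objS s p X \<and> (\<forall>a\<in>fst X. s (p ^ l) a = 0)"

definition objS_n :: "('r::comm_ring_1 \<Rightarrow> 'm::ab_group_add \<Rightarrow> 'm) \<Rightarrow> 'r \<Rightarrow> nat \<Rightarrow> 'm set \<times> 'm set \<Rightarrow> bool" where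
  "objS_n s p n X \<longleftrightarrow> objS s p X \<and> (\<forall>b\<in>snd X. s (p ^ n) b = 0)"

definition objS_ln :: "('r::comm_ring_1 \<Rightarrow> 'm::ab_group_add \<Rightarrow> 'm) \<Rightarrow> 'r \<Rightarrow> nat \<Rightarrow> nat \<Rightarrow> 'm set \<times> 'm set \<Rightarrow> bool" where
  "objS_ln s p l n X \<longleftrightarrow> objS_l s p l X \<and> objS_n s p n X"

definition is_hom :: "('r::comm_ring_1 \<Rightarrow> 'm::ab_group_add \<Rightarrow> 'm) \<Rightarrow> ('r \<Rightarrow> 'n::ab_group_add \<Rightarrow> 'n)
    \<Rightarrow> 'm set \<times> 'm set \<Rightarrow> 'n set \<times> 'n set \<Rightarrow> ('m \<Rightarrow> 'n) \<Rightarrow> bool" where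
  "is_hom s s' X X' f \<longleftrightarrow> f ` snd X \<subseteq> snd X' \<and>
     (\<forall>x\<in>snd X. \<forall>y\<in>snd X. f (x + y) = f x + f y) \<and>
     (\<forall>r. \<forall>x\<in>snd X. f (s r x) = s' r (f x)) \<and> f ` fst X \<subseteq> fst X'"

(* Lifting and reducing (identity on maps) *)
definition up :: "('r \<Rightarrow> 'm \<Rightarrow> 'm) \<Rightarrow> 'r \<Rightarrow> 'm set \<times> 'm set \<Rightarrow> 'm set \<times> 'm set" where
  "up s p X = ({b \<in> snd X. s p b \<in> fst X}, snd X)"

definition down :: "('r \<Rightarrow> 'm \<Rightarrow> 'm) \<Rightarrow> 'r \<Rightarrow> 'm set \<times> 'm set \<Rightarrow> 'm set \<times> 'm set" where
  "down s p X = (s p ` fst X, snd X)"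

(* U\<up> and U\<down> as full subcategories (object predicates) *)
definition lifted :: "('r \<Rightarrow> 'm \<Rightarrow> 'm) \<Rightarrow> 'r \<Rightarrow> ('m set \<times> 'm set \<Rightarrow> bool) \<Rightarrow> 'm set \<times> 'm set \<Rightarrow> bool" where
  "lifted s p U X \<longleftrightarrow> (\<exists>Y. U Y \<and> X = up s p Y)"

definition reduced :: "('r \<Rightarrow> 'm \<Rightarrow> 'm) \<Rightarrow> 'r \<Rightarrow> ('m set \<times> 'm set \<Rightarrow> bool) \<Rightarrow> 'm set \<times> 'm set \<Rightarrow> bool" where
  "reduced s p U X \<longleftrightarrow> (\<exists>Y. U Y \<and> X = down s p Y)"

(* C, D are the object classes in the module universe of type 'm,
   C', D' the same classes in the universe of type 'n (morphisms may go between types). *)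
definition updown_iso ::
  "('r::comm_ring_1 \<Rightarrow> 'm::ab_group_add \<Rightarrow> 'm) \<Rightarrow> ('r \<Rightarrow> 'n::ab_group_add \<Rightarrow> 'n) \<Rightarrow> 'r
   \<Rightarrow> ('m set \<times> 'm set \<Rightarrow> bool) \<Rightarrow> ('n set \<times> 'n set \<Rightarrow> bool)
   \<Rightarrow> ('m set \<times> 'm set \<Rightarrow> bool) \<Rightarrow> ('n set \<times> 'n set \<Rightarrow> bool) \<Rightarrow> bool" where
  "updown_iso s s' p C C' D D' \<longleftrightarrow>
     (\<forall>X. C X \<longrightarrow> D (down s p X)) \<and> (\<forall>X. C' X \<longrightarrow> D' (down s' p X)) \<and>
     (\<forall>Y. D Y \<longrightarrow> C (up s p Y)) \<and> (\<forall>Y. D' Y \<longrightarrow> C' (up s' p Y)) \<and>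
     (\<forall>X. C X \<longrightarrow> up s p (down s p X) = X) \<and> (\<forall>Y. D Y \<longrightarrow> down s p (up s p Y) = Y) \<and>
     (\<forall>X X' f. C X \<and> C' X' \<and> is_hom s s' X X' f \<longrightarrow> is_hom s s' (down s p X) (down s' p X') f) \<and>
     (\<forall>Y Y' f. D Y \<and> D' Y' \<and> is_hom s s' Y Y' f \<longrightarrow> is_hom s s' (up s p Y) (up s' p Y') f)"

end

theory Submission
  imports Defs
begin

text \<open>For \<open>A \<subseteq> B\<close> we have \<open>p (p\<^sup>-\<^sup>1 (pA)) = pA\<close>, and always \<open>p\<^sup>-\<^sup>1 (p (p\<^sup>-\<^sup>1 A)) = p\<^sup>-\<^sup>1 A\<close>; so on
  reduced objects \<open>\<down> \<circ> \<up>\<close> is the identity and on lifted objects \<open>\<up> \<circ> \<down>\<close> is the identity.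
  Both operations preserve objects and morphisms (multiplication by \<open>p\<close> commutes with linear
  maps), and they shift the exponent annihilating the submodule by one while leaving the
  ambient module untouched.\<close>

lemma subspace_scale_image:
  assumes "module s" "module.subspace s A"
  shows "module.subspace s (s p ` A)"
proof -
  interpret module s by fact
  have "\<And>c x. s c (s p x) = s p (s c x)" by (simp add: mult.commute)
  then show ?thesis using assms(2) unfolding subspace_def
    by (auto simp: scale_right_distrib[symmetric] image_iff simp del: scale_scale)
      (rule bexI[of _ 0]; simp)
qed

lemma subspace_scale_preimage:
  assumes "module s" "module.subspace s A" "module.subspace s B"
  shows "module.subspace s {b \<in> B. s p b \<in> A}"
proof -
  interpret module s by fact
  have "\<And>c x. s p (s c x) = s c (s p x)" by (simp add: mult.commute)
  then show ?thesis using assms(2,3) unfolding subspace_def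
    by (auto simp: scale_right_distrib simp del: scale_scale)
qed

lemma module_scale_pow_Suc: "module s \<Longrightarrow> s (p ^ Suc l) b = s (p ^ l) (s p b)"
  by (simp add: module.scale_scale mult.commute)

lemma objS_up: "module s \<Longrightarrow> objS s p Y \<Longrightarrow> objS s p (up s p Y)"
  unfolding objS_def up_def p_module_def by (auto intro: subspace_scale_preimage)

lemma objS_down: "module s \<Longrightarrow> objS s p Y \<Longrightarrow> objS s p (down s p Y)"
  unfolding objS_def down_def p_module_def
  by (auto intro: subspace_scale_image module.subspace_scale)

lemma objS_n_up: "module s \<Longrightarrow> objS_n s p n Y \<Longrightarrow> objS_n s p n (up s p Y)"
  using objS_up[of s p Y] unfolding objS_n_def by (simp add: up_def)

lemma objS_n_down: "module s \<Longrightarrow> objS_n s p n Y \<Longrightarrow> objS_n s p n (down s p Y)"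
  using objS_down[of s p Y] unfolding objS_n_def by (simp add: down_def)

lemma objS_l_up: "module s \<Longrightarrow> objS_l s p l Y \<Longrightarrow> objS_l s p (l + 1) (up s p Y)"
  using objS_up[of s p Y] unfolding objS_l_def
  by (simp add: up_def module_scale_pow_Suc del: power_Suc)

lemma objS_l_down: "module s \<Longrightarrow> objS_l s p (l + 1) Y \<Longrightarrow> objS_l s p l (down s p Y)"
  using objS_down[of s p Y] unfolding objS_l_def
  by (simp add: down_def module_scale_pow_Suc del: power_Suc)

lemma objS_ln_up: "module s \<Longrightarrow> objS_ln s p l n Y \<Longrightarrow> objS_ln s p (l + 1) n (up s p Y)"
  unfolding objS_ln_def using objS_l_up objS_n_up by blast

lemma objS_ln_down: "module s \<Longrightarrow> objS_ln s p (l + 1) n Y \<Longrightarrow> objS_ln s p l n (down s p Y)"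
  unfolding objS_ln_def using objS_l_down objS_n_down by blast

lemma up_down_up: "up s p (down s p (up s p Y)) = up s p Y"
  by (auto simp: up_def down_def)

lemma down_up_down:
  assumes "fst Y \<subseteq> snd Y"
  shows "down s p (up s p (down s p Y)) = down s p Y"
proof -
  have "s p ` {b \<in> snd Y. s p b \<in> s p ` fst Y} = s p ` fst Y"
    using assms by blast
  then show ?thesis by (simp add: up_def down_def)
qed

lemma is_hom_up: "is_hom s s' X X' f \<Longrightarrow> is_hom s s' (up s p X) (up s' p X') f"
  unfolding is_hom_def up_def by (auto simp: image_subset_iff)

lemma is_hom_down:
  assumes "fst X \<subseteq> snd X" and f: "is_hom s s' X X' f"
  shows "is_hom s s' (down s p X) (down s' p X') f"
proof -
  have "f (s p a) = s' p (f a) \<and> f a \<in> fst X'" if "a \<in> fst X" for a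
    using that assms unfolding is_hom_def by blast
  then have "f ` s p ` fst X \<subseteq> s' p ` fst X'" by blast
  with f show ?thesis unfolding is_hom_def down_def by simp
qed

lemma updown_isoI:
  assumes up_UV: "\<And>Y. U Y \<Longrightarrow> V (up s p Y)" and down_VU: "\<And>Y. V Y \<Longrightarrow> U (down s p Y)"
    and up_UV': "\<And>Y. U' Y \<Longrightarrow> V' (up s' p Y)" and down_VU': "\<And>Y. V' Y \<Longrightarrow> U' (down s' p Y)"
    and V_sub: "\<And>Y. V Y \<Longrightarrow> fst Y \<subseteq> snd Y"
  shows "updown_iso s s' p (lifted s p U) (lifted s' p U') (reduced s p V) (reduced s' p V')"
  unfolding updown_iso_def lifted_def reduced_def
proof (intro conjI allI impI)
  fix X assume "\<exists>Y. U Y \<and> X = up s p Y"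
  then show "\<exists>Y. V Y \<and> down s p X = down s p Y" using up_UV by blast
next
  fix X assume "\<exists>Y. U' Y \<and> X = up s' p Y"
  then show "\<exists>Y. V' Y \<and> down s' p X = down s' p Y" using up_UV' by blast
next
  fix X assume "\<exists>Y. V Y \<and> X = down s p Y"
  then show "\<exists>Y. U Y \<and> up s p X = up s p Y" using down_VU by blast
next
  fix X assume "\<exists>Y. V' Y \<and> X = down s' p Y"
  then show "\<exists>Y. U' Y \<and> up s' p X = up s' p Y" using down_VU' by blast
next
  fix X assume "\<exists>Y. U Y \<and> X = up s p Y"
  then show "up s p (down s p X) = X" using up_down_up by metis
next
  fix X assume "\<exists>Y. V Y \<and> X = down s p Y"
  then show "down s p (up s p X) = X" using V_sub down_up_down by metis
next
  fix X X' f
  assume "(\<exists>Y. U Y \<and> X = up s p Y) \<and> (\<exists>Y. U' Y \<and> X' = up s' p Y) \<and> is_hom s s' X X' f"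
  moreover have "fst (up s p Y) \<subseteq> snd (up s p Y)" for Y
    by (auto simp: up_def)
  ultimately show "is_hom s s' (down s p X) (down s' p X') f"
    using is_hom_down by blast
next
  fix X X' f
  assume "(\<exists>Y. V Y \<and> X = down s p Y) \<and> (\<exists>Y. V' Y \<and> X' = down s' p Y) \<and> is_hom s s' X X' f"
  then show "is_hom s s' (up s p X) (up s' p X') f" using is_hom_up by blast
qed

theorem lemma7:
  fixes s :: "'r::idom \<Rightarrow> 'm::ab_group_add \<Rightarrow> 'm"
    and s' :: "'r \<Rightarrow> 'n::ab_group_add \<Rightarrow> 'n"
    and p :: 'r and l n :: nat
  assumes "all_ideals_principal TYPE('r)"
    and "maximal_ideal (principal p)"
    and "module s" and "module s'"
  shows "updown_iso s s' p (lifted s p (objS s p)) (lifted s' p (objS s' p))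
                           (reduced s p (objS s p)) (reduced s' p (objS s' p))
       \<and> updown_iso s s' p (lifted s p (objS_n s p n)) (lifted s' p (objS_n s' p n))
                           (reduced s p (objS_n s p n)) (reduced s' p (objS_n s' p n))
       \<and> updown_iso s s' p (lifted s p (objS_l s p l)) (lifted s' p (objS_l s' p l))
                           (reduced s p (objS_l s p (l + 1))) (reduced s' p (objS_l s' p (l + 1)))
       \<and> updown_iso s s' p (lifted s p (objS_ln s p l n)) (lifted s' p (objS_ln s' p l n))
                           (reduced s p (objS_ln s p (l + 1) n)) (reduced s' p (objS_ln s' p (l + 1) n))"
proof -
  have "objS_n s p n Y \<Longrightarrow> objS s p Y" "objS_l s p l Y \<Longrightarrow> objS s p Y"
    "objS_ln s p l n Y \<Longrightarrow> objS s p Y" "objS s p Y \<Longrightarrow> fst Y \<subseteq> snd Y"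
    for s :: "'r \<Rightarrow> 'x::ab_group_add \<Rightarrow> 'x" and l Y
    by (simp_all add: objS_def objS_n_def objS_l_def objS_ln_def)
  with assms(3,4) show ?thesis
    by (intro conjI updown_isoI)
      (blast intro: objS_up objS_down objS_n_up objS_n_down objS_l_up objS_l_down
        objS_ln_up objS_ln_down)+
qed

end
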